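(* Let $\varphi\in\mathrm{THT}_1(\mathsf X,\mathsf G)$ and let $M$ be an equilibrium model of $\varphi$. Then every witness extraction of $M$ for $\varphi$ is also an equilibrium model of $\varphi$.
   Context: Fix a finite set $P$ of atomic propositions. THT formulas over $P$: $\varphi ::= p \mid \bot \mid \varphi\vee\varphi \mid \varphi\wedge\varphi \mid \varphi\rightarrow\varphi \mid \mathsf{X}\varphi \mid \varphi\,\mathsf{U}\,\varphi \mid \varphi\,\mathsf{R}\,\varphi$, with $\neg\varphi:=\varphi\rightarrow\bot$, $\top:=\neg\bot$, $\mathsf F\varphi:=\top\mathsf U\varphi$, $\mathsf G\varphi:=\bot\mathsf R\varphi$. A THT interpretation is a pair $M=(H,T)$ of infinite words over $2^P$ with $H(i)\subseteq T(i)$ for all $i$. Write $M(i)=(H(i),T(i))$; $M$ is total if $H=T$. Satisfaction $M,i\models\varphi$ is defined by: - $M,i\not\models\bot$; - $M,i\models p$ iff $p\in H(i)$; - $\vee$ and $\wedge$ are interpreted as usual; - $M,i\models\varphi\rightarrow\psi$ iff for both $H'\in\{H,T\}$, either $(H',T),i\not\models\varphi$ or $(H',T),i\models\psi$; - $M,i\models\mathsf X\varphi$ iff $M,i+1\models\varphi$; - $\mathsf U$ and $\mathsf R$ have the usual LTL clauses evaluated in $M$ (so $M,i\models\mathsf G\varphi$ iff $M,j\models\varphi$ for all $j\ge i$). $M\models\varphi$ means $M,0\models\varphi$. An equilibrium model of $\varphi$ is a total $(T,T)\models\varphi$ with $(H,T)\not\models\varphi$ whenever $H(i)\subseteq T(i)$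 for all $i$ and $H\ne T$. $\mathrm{THT}_1(\mathsf X,\mathsf G)$ is the set of formulas whose only temporal modalities are $\mathsf X$ and $\mathsf G$, with no temporal modality nested inside another. Witness pattern. A witness pattern of $M=(H,T)$ for $\varphi$ is a strictly increasing sequence $n_0<n_1<\cdots$ such that, for some $k\ge0$, $M(n_i)=M(n_{k+1})$ for all $i\ge k+1$, and $W=\{n_0,\dots,n_k\}$ is minimal with respect to the following conditions: - $0\in W$, and $1\in W$ if $\varphi$ has a subformula $\mathsf X\psi$; - if $M$ is not total, some $i$ with $H(i)\subsetneq T(i)$ is in $W$; - for each subformula $\varphi_1\mathsf U\varphi_2$: if $M\models\varphi_1\mathsf U\varphi_2$, the least $i$ with $M,i\models\varphi_2$ is in $W$; if $M\not\models\varphi_1\mathsf U\varphi_2$ and $M\models\mathsf F\varphi_2$, the least $i$ with $M,i\not\models\varphi_1$ is in $W$; - for each subformula $\varphi_1\mathsf R\varphi_2$ (in particular each $\mathsf G\psi=\bot\mathsf R\psi$): if $M\not\models\varphi_1\mathsf R\varphi_2$, the least $i$ with $M,i\not\models\varphi_2$ is in $W$; if $M\models\varphi_1\mathsf R\varphi_2$ and $M\not\models\mathsf G\varphi_2$, the least $i$ with $M,i\models\varphi_1\wedge\varphi_2$ is in $W$. A witness extraction of $M$ for $\varphi$ is an interpretation $M(n_0),M(n_1),\dots$ where $n_0<n_1<\cdots$ is a witness pattern of $M$ for $\varphi$. *)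

theory Defs
  imports Main
begin

datatype 'a tht =
    Atom 'a
  | Bot
  | Or "'a tht" "'a tht"
  | And "'a tht" "'a tht"
  | Imp "'a tht" "'a tht"
  | Next "'a tht"
  | Until "'a tht" "'a tht"
  | Release "'a tht" "'a tht"

definition Neg :: "'a tht \<Rightarrow> 'a tht" where "Neg \<phi> = Imp \<phi> Bot"
definition Top :: "'a tht" where "Top = Neg Bot"
definition Ev :: "'a tht \<Rightarrow> 'a tht" where "Ev \<phi> = Until Top \<phi>"
definition Alw :: "'a tht \<Rightarrow> 'a tht" where "Alw \<phi> = Release Bot \<phi>"

section \<open>Semantics: an interpretation M = (H,T) is given by two words H T :: nat => 'a set\<close>

fun sat :: "(nat \<Rightarrow> 'a set) \<Rightarrow> (nat \<Rightarrow> 'a set) \<Rightarrow> nat \<Rightarrow> 'a tht \<Rightarrow> bool" where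
  "sat H T i (Atom p) = (p \<in> H i)"
| "sat H T i Bot = False"
| "sat H T i (Or a b) = (sat H T i a \<or> sat H T i b)"
| "sat H T i (And a b) = (sat H T i a \<and> sat H T i b)"
| "sat H T i (Imp a b) =
     ((\<not> sat H T i a \<or> sat H T i b) \<and> (\<not> sat T T i a \<or> sat T T i b))"
| "sat H T i (Next a) = sat H T (Suc i) a"
| "sat H T i (Until a b) =
     (\<exists>j\<ge>i. sat H T j b \<and> (\<forall>k. i \<le> k \<and> k < j \<longrightarrow> sat H T k a))"
| "sat H T i (Release a b) =
     (\<forall>j\<ge>i. sat H T j b \<or> (\<exists>k. i \<le> k \<and> k < j \<and> sat H T k a))"

definition tht_interp :: "(nat \<Rightarrow> 'a set) \<Rightarrow> (nat \<Rightarrow> 'a set) \<Rightarrow> bool" where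
  "tht_interp H T \<longleftrightarrow> (\<forall>i. H i \<subseteq> T i)"

definition models :: "(nat \<Rightarrow> 'a set) \<Rightarrow> (nat \<Rightarrow> 'a set) \<Rightarrow> 'a tht \<Rightarrow> bool" where
  "models H T \<phi> \<longleftrightarrow> sat H T 0 \<phi>"

text \<open>Equilibrium model (T,T) of phi (given by its total trace T).\<close>
definition equilibrium_model :: "'a tht \<Rightarrow> (nat \<Rightarrow> 'a set) \<Rightarrow> bool" where
  "equilibrium_model \<phi> T \<longleftrightarrow>
     models T T \<phi> \<and>
     (\<forall>H. (\<forall>i. H i \<subseteq> T i) \<and> H \<noteq> T \<longrightarrow> \<not> models H T \<phi>)"

fun subfs :: "'a tht \<Rightarrow> 'a tht set" where
  "subfs (Atom p) = {Atom p}"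
| "subfs Bot = {Bot}"
| "subfs (Or a b) = insert (Or a b) (subfs a \<union> subfs b)"
| "subfs (And a b) = insert (And a b) (subfs a \<union> subfs b)"
| "subfs (Imp a b) = insert (Imp a b) (subfs a \<union> subfs b)"
| "subfs (Next a) = insert (Next a) (subfs a)"
| "subfs (Until a b) = insert (Until a b) (subfs a \<union> subfs b)"
| "subfs (Release a b) = insert (Release a b) (subfs a \<union> subfs b)"

fun temporal_free :: "'a tht \<Rightarrow> bool" where
  "temporal_free (Atom p) = True"
| "temporal_free Bot = True"
| "temporal_free (Or a b) = (temporal_free a \<and> temporal_free b)"
| "temporal_free (And a b) = (temporal_free a \<and> temporal_free b)"
| "temporal_free (Imp a b) = (temporal_free a \<and> temporal_free b)"
| "temporal_free (Next a) = False"
| "temporal_free (Until a b) = False"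
| "temporal_free (Release a b) = False"

text \<open>THT_1(X,G): only X and G (= Release Bot) as temporal modalities, unnested.\<close>
fun tht1_XG :: "'a tht \<Rightarrow> bool" where
  "tht1_XG (Atom p) = True"
| "tht1_XG Bot = True"
| "tht1_XG (Or a b) = (tht1_XG a \<and> tht1_XG b)"
| "tht1_XG (And a b) = (tht1_XG a \<and> tht1_XG b)"
| "tht1_XG (Imp a b) = (tht1_XG a \<and> tht1_XG b)"
| "tht1_XG (Next a) = temporal_free a"
| "tht1_XG (Until a b) = False"
| "tht1_XG (Release a b) = (a = Bot \<and> temporal_free b)"

definition witness_conds ::
  "(nat \<Rightarrow> 'a set) \<Rightarrow> (nat \<Rightarrow> 'a set) \<Rightarrow> 'a tht \<Rightarrow> nat set \<Rightarrow> bool" where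
  "witness_conds H T \<phi> W \<longleftrightarrow>
     0 \<in> W
   \<and> ((\<exists>\<psi>. Next \<psi> \<in> subfs \<phi>) \<longrightarrow> 1 \<in> W)
   \<and> (H \<noteq> T \<longrightarrow> (\<exists>i\<in>W. H i \<subset> T i))
   \<and> (\<forall>a b. Until a b \<in> subfs \<phi> \<longrightarrow>
        (models H T (Until a b) \<longrightarrow> (LEAST i. sat H T i b) \<in> W)
      \<and> (\<not> models H T (Until a b) \<and> models H T (Ev b) \<longrightarrow>
           (LEAST i. \<not> sat H T i a) \<in> W))
   \<and> (\<forall>a b. Release a b \<in> subfs \<phi> \<longrightarrow>
        (\<not> models H T (Release a b) \<longrightarrow> (LEAST i. \<not> sat H T i b) \<in> W)
      \<and> (models H T (Release a b) \<and> \<not> models H T (Alw b) \<longrightarrow>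
           (LEAST i. sat H T i (And a b)) \<in> W))"

definition witness_pattern ::
  "(nat \<Rightarrow> 'a set) \<Rightarrow> (nat \<Rightarrow> 'a set) \<Rightarrow> 'a tht \<Rightarrow> (nat \<Rightarrow> nat) \<Rightarrow> bool" where
  "witness_pattern H T \<phi> n \<longleftrightarrow>
     strict_mono n \<and>
     (\<exists>k. (\<forall>i\<ge>Suc k. H (n i) = H (n (Suc k)) \<and> T (n i) = T (n (Suc k)))
        \<and> witness_conds H T \<phi> (n ` {0..k})
        \<and> (\<forall>W'. W' \<subset> n ` {0..k} \<longrightarrow> \<not> witness_conds H T \<phi> W'))"

text \<open>The witness extraction of M=(H,T) along n is (H o n, T o n).\<close>

end

theory Submission
  imports Defs
begin

text \<open>
  Let \<open>n\<close> be a witness pattern of the equilibrium model \<open>(T,T)\<close>.  Any here-world \<open>H'\<close> below the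
  extracted trace \<open>T \<circ> n\<close> lifts to a here-world \<open>H\<close> below \<open>T\<close> that agrees with \<open>H'\<close> along \<open>n\<close> and
  with \<open>T\<close> elsewhere.  For \<open>\<phi>\<close> in \<open>THT\<^sub>1(X,G)\<close> the two interpretations satisfy \<open>\<phi>\<close> alike:
  atoms and \<open>X\<close> only look at positions \<open>0\<close> and \<open>1\<close>, which \<open>n\<close> fixes; for \<open>G b\<close> the only way the
  lifted world could fail \<open>b\<close> off the image of \<open>n\<close> is that \<open>T\<close> fails \<open>b\<close> there, and then the
  first failure of \<open>b\<close> in \<open>T\<close> is sampled by \<open>n\<close> and is seen by persistence in \<open>T \<circ> n\<close> already.
  Taking \<open>H' = T \<circ> n\<close> gives totality, and a strictly smaller \<open>H'\<close> model of \<open>\<phi>\<close> would lift to a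
  strictly smaller \<open>H\<close> model, contradicting equilibrium of \<open>T\<close>.
\<close>

lemma sat_temporal_free_cong:
  assumes "temporal_free \<psi>" and "H i = H' j" and "T i = T' j"
  shows "sat H T i \<psi> = sat H' T' j \<psi>"
  using assms
proof (induction \<psi> arbitrary: H H')
  case (Imp a b)
  then show ?case using Imp.IH[of T T'] by auto
qed auto

lemma sat_here_imp_there:
  assumes "\<forall>m. H m \<subseteq> T m" and "sat H T i \<phi>"
  shows "sat T T i \<phi>"
  using assms(2)
proof (induction \<phi> arbitrary: i)
  case (Atom p)
  then show ?case using assms(1) by auto
next
  case (Until a b)
  then show ?case by (simp only: sat.simps) blast
next
  case (Release a b)
  then show ?case by (simp only: sat.simps) blast
qed auto

lemma strict_mono_eq_id_upto:
  fixes n :: "nat \<Rightarrow> nat"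
  assumes "strict_mono n" and "{..m} \<subseteq> range n" and "i \<le> m"
  shows "n i = i"
  using assms(3)
proof (induction i)
  case 0
  then obtain j where "n j = 0" using assms(2) by (metis atMost_iff le0 rangeE subsetD)
  then show ?case using assms(1) by (metis le0 le_zero_eq strict_mono_less_eq)
next
  case (Suc i)
  then have "n i = i" by simp
  then have "Suc i \<le> n (Suc i)" using assms(1) by (metis Suc_leI lessI strict_mono_less)
  obtain j where j: "n j = Suc i" using assms(2) Suc.prems by (metis atMost_iff rangeE subsetD)
  then have "Suc i \<le> j" using \<open>n i = i\<close> assms(1) by (metis Suc_leI lessI strict_mono_less)
  then have "n (Suc i) \<le> Suc i" using j assms(1) by (metis strict_mono_less_eq)
  then show ?case using \<open>Suc i \<le> n (Suc i)\<close> by simp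
qed

text \<open>
  The part of the witness conditions that matters for \<open>THT\<^sub>1(X,G)\<close>.
\<close>
definition keeps_witnesses :: "(nat \<Rightarrow> 'a set) \<Rightarrow> 'a tht \<Rightarrow> (nat \<Rightarrow> nat) \<Rightarrow> bool" where
  "keeps_witnesses T \<phi> n \<longleftrightarrow>
     n 0 = 0
   \<and> ((\<exists>\<psi>. Next \<psi> \<in> subfs \<phi>) \<longrightarrow> n 1 = 1)
   \<and> (\<forall>b. Alw b \<in> subfs \<phi> \<and> (\<exists>j. \<not> sat T T j b) \<longrightarrow> (LEAST j. \<not> sat T T j b) \<in> range n)"

lemma keeps_witnesses_subfs:
  assumes "keeps_witnesses T \<phi> n" and "subfs \<psi> \<subseteq> subfs \<phi>"
  shows "keeps_witnesses T \<psi> n"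
  using assms unfolding keeps_witnesses_def by blast

lemma witness_pattern_keeps_witnesses:
  assumes "witness_pattern T T \<phi> n"
  shows "keeps_witnesses T \<phi> n"
proof -
  obtain k where mono: "strict_mono n" and conds: "witness_conds T T \<phi> (n ` {0..k})"
    using assms unfolding witness_pattern_def by (elim conjE exE) simp
  have sampled: "n ` {0..k} \<subseteq> range n" by blast
  note conds = conds[unfolded witness_conds_def]
  have "0 \<in> n ` {0..k}" using conds by (rule conjunct1)
  have next_one: "(\<exists>\<psi>. Next \<psi> \<in> subfs \<phi>) \<longrightarrow> 1 \<in> n ` {0..k}"
    using conds by (elim conjE)
  have first_failure: "(LEAST j. \<not> sat T T j b) \<in> n ` {0..k}"
    if "Alw b \<in> subfs \<phi>" and "\<exists>j. \<not> sat T T j b" for b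
  proof -
    have "\<not> models T T (Release Bot b) \<longrightarrow> (LEAST j. \<not> sat T T j b) \<in> n ` {0..k}"
      using conds[THEN conjunct2, THEN conjunct2, THEN conjunct2, THEN conjunct2] that(1)
      unfolding Alw_def by blast
    then show ?thesis using that(2) by (simp add: models_def)
  qed
  have "{..0} \<subseteq> range n" using \<open>0 \<in> n ` {0..k}\<close> sampled by auto
  then have "n 0 = 0" using strict_mono_eq_id_upto[OF mono] by blast
  moreover have "n 1 = 1" if "\<exists>\<psi>. Next \<psi> \<in> subfs \<phi>"
  proof -
    have "{..1} = {0, 1 :: nat}" by auto
    then have "{..1} \<subseteq> range n" using \<open>0 \<in> n ` {0..k}\<close> next_one that sampled by auto
    then show ?thesis using strict_mono_eq_id_upto[OF mono] by simp
  qed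
  ultimately show ?thesis
    using first_failure sampled unfolding keeps_witnesses_def by blast
qed

lemma lift_along_injective:
  assumes "inj n" and "\<forall>i. H' i \<subseteq> T (n i)"
  obtains H where "\<forall>i. H (n i) = H' i" and "\<forall>m. m \<notin> range n \<longrightarrow> H m = T m"
    and "\<forall>m. H m \<subseteq> T m"
proof
  define H where "H m = (if m \<in> range n then H' (inv n m) else T m)" for m
  show "\<forall>i. H (n i) = H' i" using assms(1) by (simp add: H_def)
  show "\<forall>m. m \<notin> range n \<longrightarrow> H m = T m" by (simp add: H_def)
  show "\<forall>m. H m \<subseteq> T m" using assms by (auto simp: H_def f_inv_into_f) blast
qed

lemma sat_Alw_lift_iff:
  assumes "temporal_free b" and "keeps_witnesses T (Alw b) n" and extr: "\<forall>i. T' i = T (n i)"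
    and along: "\<forall>i. H (n i) = H' i" and off: "\<forall>m. m \<notin> range n \<longrightarrow> H m = T m"
    and below: "\<forall>m. H m \<subseteq> T m"
  shows "(\<forall>j. sat H T j b) = (\<forall>i. sat H' T' i b)"
proof -
  have at_n: "sat H T (n i) b = sat H' T' i b" for i
    using along extr by (intro sat_temporal_free_cong[OF assms(1)]) simp_all
  show ?thesis
  proof
    assume "\<forall>j. sat H T j b"
    then show "\<forall>i. sat H' T' i b" using at_n by blast
  next
    assume sat_extr: "\<forall>i. sat H' T' i b"
    have "\<forall>i. H' i \<subseteq> T' i" using along below extr by metis
    then have sat_there: "sat T T (n i) b" for i
      using sat_here_imp_there sat_extr sat_temporal_free_cong[OF assms(1), of T' i T "n i" T' T] extr
      by metis
    have sat_T: "\<forall>j. sat T T j b"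
    proof (rule ccontr)
      assume fails: "\<not> (\<forall>j. sat T T j b)"
      then have "(LEAST j. \<not> sat T T j b) \<in> range n"
        using assms(2) unfolding keeps_witnesses_def Alw_def by auto
      then obtain i where "n i = (LEAST j. \<not> sat T T j b)" by auto
      then have "\<not> sat T T (n i) b" using fails by (metis LeastI)
      then show False using sat_there by blast
    qed
    show "\<forall>j. sat H T j b"
    proof
      fix j
      show "sat H T j b"
      proof (cases "j \<in> range n")
        case True
        then show ?thesis using at_n sat_extr by auto
      next
        case False
        then show ?thesis using off sat_T sat_temporal_free_cong[OF assms(1), of H j T j T T] by simp
      qed
    qed
  qed
qed

lemma sat_lift_iff:
  assumes "tht1_XG \<psi>" and "keeps_witnesses T \<psi> n" and "\<forall>i. T' i = T (n i)"
    and "\<forall>i. H (n i) = H' i" and "\<forall>m. m \<notin> range n \<longrightarrow> H m = T m" and "\<forall>m. H m \<subseteq> T m"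
  shows "sat H T 0 \<psi> = sat H' T' 0 \<psi>"
  using assms
proof (induction \<psi> arbitrary: H H')
  case (Atom p)
  then show ?case unfolding keeps_witnesses_def by (metis sat.simps(1))
next
  case (Or a b)
  have "keeps_witnesses T a n" "keeps_witnesses T b n"
    using keeps_witnesses_subfs[OF Or.prems(2)] by auto
  with Or.IH[of H H'] Or.prems show ?case by simp
next
  case (And a b)
  have "keeps_witnesses T a n" "keeps_witnesses T b n"
    using keeps_witnesses_subfs[OF And.prems(2)] by auto
  with And.IH[of H H'] And.prems show ?case by simp
next
  case (Imp a b)
  \<comment> \<open>implication also consults the there-world, i.e. the instance \<open>H = T\<close>, \<open>H' = T'\<close>\<close>
  have keeps: "keeps_witnesses T a n" "keeps_witnesses T b n"
    using keeps_witnesses_subfs[OF Imp.prems(2)] by auto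
  have "sat H T 0 a = sat H' T' 0 a" "sat T T 0 a = sat T' T' 0 a"
    by (rule Imp.IH(1); use Imp.prems keeps in auto)+
  moreover have "sat H T 0 b = sat H' T' 0 b" "sat T T 0 b = sat T' T' 0 b"
    by (rule Imp.IH(2); use Imp.prems keeps in auto)+
  ultimately show ?case by simp
next
  case (Next a)
  then have "n 1 = 1" unfolding keeps_witnesses_def by auto
  then have "H 1 = H' 1" "T 1 = T' 1" using Next.prems(3,4) by metis+
  then have "sat H T 1 a = sat H' T' 1 a" using sat_temporal_free_cong Next.prems(1) by simp
  then show ?case by simp
next
  case (Release a b)
  then have "a = Bot" and "temporal_free b" by auto
  have "(\<forall>j. sat H T j b) = (\<forall>i. sat H' T' i b)"
    by (rule sat_Alw_lift_iff) (use Release.prems \<open>temporal_free b\<close> \<open>a = Bot\<close> in \<open>simp_all add: Alw_def\<close>)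
  then show ?case using \<open>a = Bot\<close> by simp
qed auto

lemma equilibrium_model_extraction:
  assumes "tht1_XG \<phi>" and "equilibrium_model \<phi> T" and "inj n" and "keeps_witnesses T \<phi> n"
  shows "equilibrium_model \<phi> (T \<circ> n)"
proof -
  have total: "sat T T 0 \<phi>" and minimal: "\<And>H. \<forall>i. H i \<subseteq> T i \<Longrightarrow> H \<noteq> T \<Longrightarrow> \<not> sat H T 0 \<phi>"
    using assms(2) unfolding equilibrium_model_def models_def by blast+
  have lift_iff: "sat H T 0 \<phi> = sat H' (T \<circ> n) 0 \<phi>"
    if "\<forall>i. H (n i) = H' i" and "\<forall>m. m \<notin> range n \<longrightarrow> H m = T m" and "\<forall>m. H m \<subseteq> T m" for H H'
    using sat_lift_iff[OF assms(1,4) _ that] by simp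
  have "\<not> sat H' (T \<circ> n) 0 \<phi>" if below': "\<forall>i. H' i \<subseteq> T (n i)" and smaller: "H' \<noteq> T \<circ> n" for H'
  proof -
    obtain H where along: "\<forall>i. H (n i) = H' i" and off: "\<forall>m. m \<notin> range n \<longrightarrow> H m = T m"
      and below: "\<forall>m. H m \<subseteq> T m"
      using lift_along_injective[OF assms(3) below'] by blast
    have "H \<noteq> T"
    proof
      assume "H = T"
      then have "H' = T \<circ> n" using along by (simp add: fun_eq_iff)
      then show False using smaller by contradiction
    qed
    then show ?thesis using minimal[OF below] lift_iff[OF along off below] by simp
  qed
  moreover have "sat (T \<circ> n) (T \<circ> n) 0 \<phi>" using total lift_iff[of T "T \<circ> n"] by simp
  ultimately show ?thesis unfolding equilibrium_model_def models_def by simp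
qed

theorem mainTheorem8:
  fixes \<phi> :: "'a::finite tht" and T :: "nat \<Rightarrow> 'a set" and n :: "nat \<Rightarrow> nat"
  assumes "tht1_XG \<phi>"
    and "equilibrium_model \<phi> T"
    and "witness_pattern T T \<phi> n"
  shows "equilibrium_model \<phi> (T \<circ> n)"
proof -
  have "inj n"
    using assms(3) strict_mono_imp_inj_on unfolding witness_pattern_def by (elim conjE) simp
  then show ?thesis
    using equilibrium_model_extraction[OF assms(1,2)] witness_pattern_keeps_witnesses[OF assms(3)]
    by blast
qed

end
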